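(* Let $d\ge 1$ and $\delta>0$, and let $\mathcal{W}$ and $\mathcal{N}$ be the sets of trees defined in the context. Then $\mathcal{W}$ and $\mathcal{N}$ are both finite sets.
   Context: Trees are formal symbols. The set $\widehat{\mathcal{T}}_r$ is the smallest set containing the generators $\mathbf{1},\mathbf{X}_1,\dots,\mathbf{X}_d,\Xi$ and such that whenever $\tau_1,\tau_2,\tau_3\in\widehat{\mathcal{T}}_r$, the formal expression $\mathcal{I}(\tau_1)\mathcal{I}(\tau_2)\mathcal{I}(\tau_3)$ (a non-commutative "tree product" of the three "planted trees" $\mathcal{I}(\tau_k)$; different orderings of the factors give different trees) belongs to $\widehat{\mathcal{T}}_r$. The order $|\cdot|$ of a tree is defined recursively by $|\mathbf{1}|=-2$, $|\mathbf{X}_i|=-1$ for $1\le i\le d$, $|\Xi|=-3+\delta$, $|\mathcal{I}(\tau_1)\mathcal{I}(\tau_2)\mathcal{I}(\tau_3)|=6+|\tau_1|+|\tau_2|+|\tau_3|$ (and $|\mathcal{I}(\tau)|=|\tau|+2$ for planted trees). Define $\mathcal{W}=\{\tau\in\widehat{\mathcal{T}}_r:\ |\tau|<-2\}$ and $\mathcal{N}=\{\tau\in\widehat{\mathcal{T}}_r:\ -2\le|\tau|\le 0\}$. *)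

theory Defs
  imports Complex_Main
begin

text \<open>Formal trees. \<open>TOne\<close> is the symbol 1, \<open>TX i\<close> is X_i, \<open>TXi\<close> is Xi, and
 \<open>TProd t1 t2 t3\<close> is the (ordered, non-commutative) tree product I(t1) I(t2) I(t3).\<close>
datatype tree = TOne | TX nat | TXi | TProd tree tree tree

fun in_Tr :: "nat \<Rightarrow> tree \<Rightarrow> bool" where
  "in_Tr d TOne = True"
| "in_Tr d (TX i) = (1 \<le> i \<and> i \<le> d)"
| "in_Tr d TXi = True"
| "in_Tr d (TProd t1 t2 t3) = (in_Tr d t1 \<and> in_Tr d t2 \<and> in_Tr d t3)"

definition Tr :: "nat \<Rightarrow> tree set" where
  "Tr d = {t. in_Tr d t}"

fun tree_order :: "real \<Rightarrow> tree \<Rightarrow> real" where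
  "tree_order \<delta> TOne = -2"
| "tree_order \<delta> (TX i) = -1"
| "tree_order \<delta> TXi = -3 + \<delta>"
| "tree_order \<delta> (TProd t1 t2 t3) = 6 + tree_order \<delta> t1 + tree_order \<delta> t2 + tree_order \<delta> t3"

definition W_set :: "nat \<Rightarrow> real \<Rightarrow> tree set" where
  "W_set d \<delta> = {t \<in> Tr d. tree_order \<delta> t < -2}"

definition N_set :: "nat \<Rightarrow> real \<Rightarrow> tree set" where
  "N_set d \<delta> = {t \<in> Tr d. -2 \<le> tree_order \<delta> t \<and> tree_order \<delta> t \<le> 0}"

end

theory Submission
  imports Defs
begin

text \<open>Every leaf has order at least \<open>e - 3\<close>, where \<open>e = min \<delta> 1 > 0\<close>, and a product of
three trees adds \<open>6\<close> to the sum of their orders, so each product node raises the lower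
bound by \<open>2e\<close>. Hence trees of bounded order have boundedly many product nodes, and with
finitely many leaf symbols there are only finitely many such trees.\<close>

fun num_prods :: "tree \<Rightarrow> nat" where
  "num_prods (TProd t1 t2 t3) = Suc (num_prods t1 + num_prods t2 + num_prods t3)"
| "num_prods _ = 0"

lemma tree_order_ge_num_prods:
  assumes "e \<le> 1" "e \<le> \<delta>"
  shows "(2 * real (num_prods t) + 1) * e - 3 \<le> tree_order \<delta> t"
  using assms by (induction t) (auto simp: algebra_simps)

lemma finite_Tr_num_prods_le: "finite {t \<in> Tr d. num_prods t \<le> n}"
proof (induction n)
  case 0
  have "{t \<in> Tr d. num_prods t \<le> 0} \<subseteq> {TOne, TXi} \<union> TX ` {1..d}"
  proof
    fix t assume "t \<in> {t \<in> Tr d. num_prods t \<le> 0}"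
    then show "t \<in> {TOne, TXi} \<union> TX ` {1..d}" by (cases t) (auto simp: Tr_def)
  qed
  then show ?case by (rule finite_subset) auto
next
  case (Suc n)
  let ?S = "{t \<in> Tr d. num_prods t \<le> n}"
  have "{t \<in> Tr d. num_prods t \<le> Suc n} \<subseteq>
          {TOne, TXi} \<union> TX ` {1..d} \<union> (\<lambda>(t1, t2, t3). TProd t1 t2 t3) ` (?S \<times> ?S \<times> ?S)"
  proof
    fix t assume "t \<in> {t \<in> Tr d. num_prods t \<le> Suc n}"
    then show "t \<in> {TOne, TXi} \<union> TX ` {1..d} \<union> (\<lambda>(t1, t2, t3). TProd t1 t2 t3) ` (?S \<times> ?S \<times> ?S)"
      by (cases t) (auto simp: Tr_def image_iff)
  qed
  then show ?case by (rule finite_subset) (use Suc in auto)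
qed

lemma finite_Tr_tree_order_le:
  assumes "\<delta> > 0"
  shows "finite {t \<in> Tr d. tree_order \<delta> t \<le> c}"
proof -
  define e where "e = min \<delta> 1"
  have e: "0 < e" "e \<le> 1" "e \<le> \<delta>"
    using assms by (auto simp: e_def)
  define n where "n = nat \<lceil>(c + 3) / e\<rceil>"
  have "num_prods t \<le> n" if "tree_order \<delta> t \<le> c" for t
  proof -
    have "(2 * real (num_prods t) + 1) * e - 3 \<le> c"
      using tree_order_ge_num_prods[OF e(2,3), of t] that by linarith
    moreover have "0 \<le> real (num_prods t) * e"
      using e by simp
    moreover have "(2 * real (num_prods t) + 1) * e = 2 * (real (num_prods t) * e) + e"
      by (simp add: algebra_simps)
    ultimately have "real (num_prods t) * e \<le> c + 3"
      using e by linarith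
    then have "real (num_prods t) \<le> (c + 3) / e"
      using e by (simp add: field_simps)
    then show ?thesis
      unfolding n_def by linarith
  qed
  then have "{t \<in> Tr d. tree_order \<delta> t \<le> c} \<subseteq> {t \<in> Tr d. num_prods t \<le> n}"
    by blast
  then show ?thesis
    using finite_Tr_num_prods_le by (rule finite_subset)
qed

theorem lemma3p3:
  fixes d :: nat and \<delta> :: real
  assumes "d \<ge> 1" and "\<delta> > 0"
  shows "finite (W_set d \<delta>) \<and> finite (N_set d \<delta>)"
proof -
  have "W_set d \<delta> \<subseteq> {t \<in> Tr d. tree_order \<delta> t \<le> 0}"
    and "N_set d \<delta> \<subseteq> {t \<in> Tr d. tree_order \<delta> t \<le> 0}"
    by (auto simp: W_set_def N_set_def)
  then show ?thesis
    using finite_Tr_tree_order_le[OF \<open>\<delta> > 0\<close>] finite_subset by blast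
qed

end
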